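(* Let $0<c_3<1/4$, $c_5\in\mathbb{R}$, $b_2=\frac{1-\sqrt{1-4c_3}}{2}$, $b_3=\frac{1+\sqrt{1-4c_3}}{2}$. For $b_2\le\alpha\le b_3$ put $$J(\alpha)=\int_{b_2}^{\alpha}\frac{(c_3+\rho^2)^{2m-1}}{\{\rho^{2m}-(c_3+\rho^2)^{2m}\}^{\frac{2m-1}{2m}}}\,d\rho$$ (a finite, strictly increasing function) and $d_2=J(b_3)>0$. Define $\hat\alpha:[c_5-d_2,c_5+d_2]\to[b_2,b_3]$ by letting $\hat\alpha(u)$ be the unique $\alpha\in[b_2,b_3]$ with $J(\alpha)=|u-c_5|$, and extend it to $\alpha^*:\mathbb{R}\to[b_2,b_3]$ by $\alpha^*(u+2kd_2)=\hat\alpha(u)$ for $u\in[c_5-d_2,c_5+d_2]$, $k\in\mathbb{Z}$. Then $\alpha^*$ is a well-defined, $2d_2$-periodic $C^2$ function on $\mathbb{R}$, and the rotational surface $$f^*(u,v)=(\alpha^*(u)\cos v,\ \alpha^*(u)\sin v,\ u),\qquad (u,v)\in\mathbb{R}\times[0,2\pi],$$ has a Birkhoff–Gauss map that is $C^1$ on the whole domain (with orientation: $\nabla\Phi(\eta)$ is a positive multiple of $f^*_u\times f^*_v$) and has constant Minkowski mean curvature $-1$.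
   Context: Fix an integer $m\ge 2$. Let $\Phi(x_1,x_2,x_3)=(x_1^2+x_2^2)^m+x_3^{2m}$ and let $\|\cdot\|$ be the norm on $\mathbb{R}^3$ whose unit sphere is $S=\{x\in\mathbb{R}^3:\Phi(x)=1\}$ (a smooth, strictly convex surface). For a surface given by a parametrization $f(s,v)$, its Birkhoff–Gauss map $\eta$ is the map into $S$ defined by requiring $\eta\in S$ and $\nabla\Phi(\eta)=\mu\, f_s\times f_v$ for some function $\mu>0$, where $\times$ is the standard cross product (so the tangent plane of $S$ at $\eta(p)$ is parallel to $T_pM$, and $d\eta_p$ is an endomorphism of $T_pM$). Where $\eta$ is $C^1$, the Minkowski mean curvature is $H=\tfrac12\operatorname{trace}(d\eta_p)$. *)

theory Defs
  imports "HOL-Analysis.Analysis" "HOL-Analysis.Cross3"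
begin

text \<open>The gauge function Phi; its level set Phi = 1 is the unit sphere S.\<close>
definition Phi :: "nat \<Rightarrow> real^3 \<Rightarrow> real" where
  "Phi m x = ((x$1)^2 + (x$2)^2)^m + (x$3)^(2*m)"

text \<open>The integrand of J and the function J itself (Henstock-Kurzweil integral,
  which covers the convergent improper integral at the endpoints).\<close>
definition Jint :: "nat \<Rightarrow> real \<Rightarrow> real \<Rightarrow> real" where
  "Jint m c3 \<rho> = (c3 + \<rho>^2)^(2*m-1) /
      (\<rho>^(2*m) - (c3 + \<rho>^2)^(2*m)) powr ((real (2*m) - 1) / real (2*m))"

definition b2 :: "real \<Rightarrow> real" where "b2 c3 = (1 - sqrt (1 - 4*c3)) / 2"
definition b3 :: "real \<Rightarrow> real" where "b3 c3 = (1 + sqrt (1 - 4*c3)) / 2"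

definition J :: "nat \<Rightarrow> real \<Rightarrow> real \<Rightarrow> real" where
  "J m c3 \<alpha> = integral {b2 c3..\<alpha>} (Jint m c3)"

definition d2 :: "nat \<Rightarrow> real \<Rightarrow> real" where "d2 m c3 = J m c3 (b3 c3)"

definition alpha_hat :: "nat \<Rightarrow> real \<Rightarrow> real \<Rightarrow> real \<Rightarrow> real" where
  "alpha_hat m c3 c5 u = (THE \<alpha>. \<alpha> \<in> {b2 c3..b3 c3} \<and> J m c3 \<alpha> = \<bar>u - c5\<bar>)"

definition is_alpha_star :: "nat \<Rightarrow> real \<Rightarrow> real \<Rightarrow> (real \<Rightarrow> real) \<Rightarrow> bool" where
  "is_alpha_star m c3 c5 a \<longleftrightarrow>
     (\<forall>u \<in> {c5 - d2 m c3..c5 + d2 m c3}. \<forall>k::int.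
        a (u + 2 * real_of_int k * d2 m c3) = alpha_hat m c3 c5 u)"

definition C2_real :: "(real \<Rightarrow> real) \<Rightarrow> bool" where
  "C2_real f \<longleftrightarrow> (\<forall>x. f differentiable at x) \<and> (\<forall>x. deriv f differentiable at x)
      \<and> continuous_on UNIV (deriv (deriv f))"

definition pdom :: "(real \<times> real) set" where "pdom = UNIV \<times> {0..2*pi}"

definition rot_surf :: "(real \<Rightarrow> real) \<Rightarrow> real \<times> real \<Rightarrow> real^3" where
  "rot_surf a p = vector [a (fst p) * cos (snd p), a (fst p) * sin (snd p), fst p]"

definition pd_u :: "(real \<times> real \<Rightarrow> real^3) \<Rightarrow> real \<times> real \<Rightarrow> real^3" where
  "pd_u g p = vector_derivative (\<lambda>u. g (u, snd p)) (at (fst p))"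

definition pd_v :: "(real \<times> real \<Rightarrow> real^3) \<Rightarrow> real \<times> real \<Rightarrow> real^3" where
  "pd_v g p = vector_derivative (\<lambda>v. g (fst p, v)) (at (snd p) within {0..2*pi})"

definition is_BG_map :: "nat \<Rightarrow> (real \<times> real \<Rightarrow> real^3) \<Rightarrow> (real \<times> real \<Rightarrow> real^3) \<Rightarrow> bool" where
  "is_BG_map m f \<eta> \<longleftrightarrow>
     (\<forall>p \<in> pdom. Phi m (\<eta> p) = 1 \<and>
        (\<exists>\<mu> > 0. GDERIV (Phi m) (\<eta> p) :> \<mu> *\<^sub>R (cross3 (pd_u f p) (pd_v f p))))"

definition C1_on_dom :: "(real \<times> real \<Rightarrow> real^3) \<Rightarrow> bool" where
  "C1_on_dom g \<longleftrightarrow> (\<exists>D. (\<forall>p \<in> pdom. (g has_derivative D p) (at p within pdom)) \<and>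
        (\<forall>h. continuous_on pdom (\<lambda>p. D p h)))"

text \<open>Minkowski mean curvature at p equals H: (1/2) trace of d eta_p as endomorphism
  of T_pM, where d eta_p(f_u) = eta_u and d eta_p(f_v) = eta_v.\<close>
definition mink_mean_curv_at :: "(real \<times> real \<Rightarrow> real^3) \<Rightarrow> (real \<times> real \<Rightarrow> real^3) \<Rightarrow> real \<times> real \<Rightarrow> real \<Rightarrow> bool" where
  "mink_mean_curv_at f \<eta> p H \<longleftrightarrow>
     (\<exists>a11 a12 a21 a22.
        pd_u \<eta> p = a11 *\<^sub>R pd_u f p + a21 *\<^sub>R pd_v f p \<and>
        pd_v \<eta> p = a12 *\<^sub>R pd_u f p + a22 *\<^sub>R pd_v f p \<and>
        H = (a11 + a22) / 2)"

end

theory Submission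
  imports Defs
begin

text \<open>With \<open>q = c3 + \<rho>\<^sup>2\<close> one has \<open>q(\<rho>) \<le> \<rho>\<close> exactly on \<open>[b2, b3]\<close>, and
  \<open>D = \<rho>\<^sup>2\<^sup>m - q\<^sup>2\<^sup>m\<close> has simple zeros at the endpoints, so the integrand of \<open>J\<close> has
  singularities of order \<open>(2m - 1)/2m < 1\<close> and \<open>J\<close> is a homeomorphism \<open>[b2, b3] \<rightarrow> [0, d2]\<close>
  with \<open>J' = 1/g\<close>, \<open>g = (D\<^sup>1\<^sup>/\<^sup>2\<^sup>m / q)\<^sup>2\<^sup>m\<^sup>-\<^sup>1\<close>. Hence \<open>\<alpha>* = J\<^sup>-\<^sup>1 \<circ> T\<close> with \<open>T\<close> the triangle wave of
  period \<open>2 d2\<close>, so \<open>\<alpha>*' = \<plusminus>g(\<alpha>* )\<close> and \<open>\<alpha>*'' = (g g')(\<alpha>* )\<close>; both extend continuously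
  through the corners of \<open>T\<close>, where \<open>g(\<alpha>* ) = 0\<close>.

  The Birkhoff--Gauss map is \<open>\<eta> = (-R cos v, -R sin v, Z)\<close> with \<open>R = q(\<alpha>)/\<alpha>\<close> and
  \<open>Z = \<plusminus>D(\<alpha>)\<^sup>1\<^sup>/\<^sup>2\<^sup>m/\<alpha>\<close>: it lies on \<open>S\<close> since \<open>R\<^sup>2\<^sup>m + Z\<^sup>2\<^sup>m = 1\<close>, and \<open>\<nabla>\<Phi>(\<eta>)\<close> is parallel to
  \<open>f\<^sub>u \<times> f\<^sub>v\<close> since \<open>Z\<^sup>2\<^sup>m\<^sup>-\<^sup>1 = R\<^sup>2\<^sup>m\<^sup>-\<^sup>1 \<alpha>'\<close>. Finally \<open>\<eta>\<^sub>u = Z' f\<^sub>u\<close> and \<open>\<eta>\<^sub>v = -(R/\<alpha>) f\<^sub>v\<close>, where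
  \<open>Z' = c3/\<alpha>\<^sup>2 - 1\<close> and \<open>-R/\<alpha> = -c3/\<alpha>\<^sup>2 - 1\<close> average to \<open>-1\<close>.\<close>
lemma powr_neg_mult_le:
  fixes x w e :: real
  assumes "x > 0" "w > 0" "e \<ge> 0"
  shows "x powr (-e) * w powr (-e) \<le> ((x + w) / 2) powr (-e) * (x powr (-e) + w powr (-e))"
proof (cases "x \<ge> (x + w) / 2")
  case True
  have "x powr (-e) \<le> ((x + w) / 2) powr (-e)"
    using True assms by (intro powr_mono2') auto
  then have "x powr (-e) * w powr (-e) \<le> ((x + w) / 2) powr (-e) * w powr (-e)"
    by (simp add: mult_right_mono)
  also have "\<dots> \<le> ((x + w) / 2) powr (-e) * (x powr (-e) + w powr (-e))"
    by (intro mult_left_mono) auto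
  finally show ?thesis .
next
  case False
  then have "w powr (-e) \<le> ((x + w) / 2) powr (-e)"
    using assms by (intro powr_mono2') auto
  then have "x powr (-e) * w powr (-e) \<le> x powr (-e) * ((x + w) / 2) powr (-e)"
    by (simp add: mult_left_mono)
  also have "\<dots> \<le> ((x + w) / 2) powr (-e) * (x powr (-e) + w powr (-e))"
    by (simp add: algebra_simps)
  finally show ?thesis .
qed

lemma integrable_on_powr_diff_left:
  fixes a b e :: real
  assumes "a \<le> b" "e > -1"
  shows "(\<lambda>y. (y - a) powr e) integrable_on {a..b}"
proof -
  have "(\<lambda>x. x powr e) integrable_on {a + - a..b + - a}"
    using integrable_on_powr_from_0[of e "b - a"] assms by simp
  then show ?thesis
    using has_integral_shift_Icc_real[of "\<lambda>x. x powr e" "- a" _ a b]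
    by (auto simp: integrable_on_def o_def)
qed

lemma integrable_on_powr_diff_right:
  fixes a b e :: real
  assumes "a \<le> b" "e > -1"
  shows "(\<lambda>y. (b - y) powr e) integrable_on {a..b}"
proof -
  have "(\<lambda>y. (y - (- b)) powr e) integrable_on {-b..-a}"
    using integrable_on_powr_diff_left[of "- b" "- a" e] assms by simp
  then show ?thesis
    using has_integral_reflect_real[where f = "\<lambda>y. (b - y) powr e" and a = a and b = b]
    by (simp add: integrable_on_def add.commute)
qed

lemma power_diff_ge_mult_power:
  fixes x y :: real
  assumes "0 \<le> y" "y \<le> x"
  shows "real n * y ^ (n - 1) * (x - y) \<le> x ^ n - y ^ n"
proof -
  have "(\<Sum>i<n. y ^ (n - 1)) \<le> (\<Sum>i<n. y ^ (n - Suc i) * x ^ i)"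
  proof (rule sum_mono)
    fix i assume "i \<in> {..<n}"
    then have "y ^ (n - 1) = y ^ (n - Suc i) * y ^ i"
      by (simp flip: power_add)
    also have "\<dots> \<le> y ^ (n - Suc i) * x ^ i"
      using assms by (intro mult_left_mono power_mono) auto
    finally show "y ^ (n - 1) \<le> y ^ (n - Suc i) * x ^ i" .
  qed
  then have "real n * y ^ (n - 1) * (x - y) \<le> (x - y) * (\<Sum>i<n. y ^ (n - Suc i) * x ^ i)"
    using assms by (simp add: mult.commute mult_left_mono)
  then show ?thesis by (simp add: power_diff_sumr2)
qed

lemma DERIV_of_tendsto_deriv:
  fixes f f' :: "real \<Rightarrow> real"
  assumes "isCont f x"
    and "\<forall>\<^sub>F y in at x. (f has_real_derivative f' y) (at y)"
    and "(f' \<longlongrightarrow> L) (at x)"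
  shows "(f has_real_derivative L) (at x)"
proof -
  have "((\<lambda>y. (f y - f x) / (y - x)) \<longlongrightarrow> L) (at x)"
  proof (rule lhopital[where f' = f' and g' = "\<lambda>_. 1"])
    show "((\<lambda>y. f y - f x) \<longlongrightarrow> 0) (at x)"
      using assms(1) by (simp add: isCont_def LIM_zero)
    show "((\<lambda>y. y - x) \<longlongrightarrow> 0) (at x)"
      by (intro tendsto_eq_intros) auto
    show "\<forall>\<^sub>F y in at x. y - x \<noteq> 0"
      by (simp add: eventually_at_filter)
    show "\<forall>\<^sub>F y in at x. ((\<lambda>y. f y - f x) has_real_derivative f' y) (at y)"
      using assms(2) by eventually_elim (auto intro!: derivative_eq_intros)
    show "\<forall>\<^sub>F y in at x. ((\<lambda>y. y - x) has_real_derivative 1) (at y)"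
      by (auto intro!: derivative_eq_intros always_eventually)
    show "filterlim (\<lambda>y. f' y / 1) (nhds L) (at x)"
      using assms(3) by simp
  qed auto
  then show ?thesis by (simp add: has_field_derivative_iff)
qed

subsection \<open>The triangle wave\<close>

text \<open>\<open>arccos \<circ> cos\<close> realises the \<open>2d\<close>-periodic extension of \<open>\<bar>x - c\<bar>\<close> from
  \<open>[c - d, c + d]\<close>; its corners are the zeros of \<open>sin \<circ> tri_phase d c\<close>.\<close>

definition tri_phase :: "real \<Rightarrow> real \<Rightarrow> real \<Rightarrow> real" where
  "tri_phase d c x = pi * (x - c) / d"

definition tri_wave :: "real \<Rightarrow> real \<Rightarrow> real \<Rightarrow> real" where
  "tri_wave d c x = d / pi * arccos (cos (tri_phase d c x))"

definition tri_slope :: "real \<Rightarrow> real \<Rightarrow> real \<Rightarrow> real" where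
  "tri_slope d c x = sgn (sin (tri_phase d c x))"

lemma abs_cos_less_1: "sin (t::real) \<noteq> 0 \<Longrightarrow> \<bar>cos t\<bar> < 1"
proof -
  assume "sin t \<noteq> 0"
  then have "(sin t)\<^sup>2 > 0" by simp
  then have "(cos t)\<^sup>2 < 1" using sin_cos_squared_add[of t] by linarith
  then show ?thesis by (simp add: abs_square_less_1)
qed

lemma tri_wave_range: "d > 0 \<Longrightarrow> tri_wave d c x \<in> {0..d}"
  using arccos_lbound[of "cos (tri_phase d c x)"] arccos_ubound[of "cos (tri_phase d c x)"]
  by (auto simp: tri_wave_def field_simps)

lemma tri_wave_off_corner:
  assumes "d > 0" "sin (tri_phase d c x) \<noteq> 0"
  shows "tri_wave d c x \<in> {0<..<d}"
proof -
  let ?c = "cos (tri_phase d c x)"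
  have c: "-1 < ?c" "?c < 1" using abs_cos_less_1[OF assms(2)] by auto
  have "0 < arccos ?c" "arccos ?c < pi"
    using c arccos_lt_bounded[of ?c] by auto
  then show ?thesis using assms(1) by (auto simp: tri_wave_def field_simps)
qed

lemma tri_wave_corner:
  assumes "d > 0" "sin (tri_phase d c x) = 0"
  shows "tri_wave d c x = 0 \<or> tri_wave d c x = d"
proof -
  have "cos (tri_phase d c x) = 1 \<or> cos (tri_phase d c x) = -1"
    using sin_zero_abs_cos_one[OF assms(2)] by linarith
  then show ?thesis using assms(1) by (auto simp: tri_wave_def)
qed

lemma continuous_on_tri_wave: "d > 0 \<Longrightarrow> continuous_on UNIV (tri_wave d c)"
  unfolding tri_wave_def tri_phase_def by (intro continuous_intros) auto

lemma tri_wave_shift: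
  assumes "d > 0" "u \<in> {c - d..c + d}"
  shows "tri_wave d c (u + 2 * real_of_int k * d) = \<bar>u - c\<bar>"
proof -
  have "tri_phase d c (u + 2 * real_of_int k * d) = tri_phase d c u + (2 * pi) * of_int k"
    using assms(1) by (simp add: tri_phase_def field_simps)
  then have "cos (tri_phase d c (u + 2 * real_of_int k * d)) = cos (tri_phase d c u)"
    by (simp add: cos_add)
  moreover have "\<bar>tri_phase d c u\<bar> = pi * \<bar>u - c\<bar> / d"
    using assms(1) by (simp add: tri_phase_def abs_mult abs_divide)
  moreover have "pi * \<bar>u - c\<bar> \<le> pi * d"
    using assms(2) by (intro mult_left_mono) auto
  ultimately show ?thesis
    using assms(1) by (simp add: tri_wave_def arccos_cos_eq_abs divide_le_eq)
qed

lemma tri_wave_periodic: "d > 0 \<Longrightarrow> tri_wave d c (x + 2 * d) = tri_wave d c x"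
proof -
  assume "d > 0"
  then have "tri_phase d c (x + 2 * d) = tri_phase d c x + 2 * pi"
    by (simp add: tri_phase_def field_simps)
  then show ?thesis by (simp add: tri_wave_def)
qed

lemma has_real_derivative_tri_wave:
  assumes "d > 0" "sin (tri_phase d c x) \<noteq> 0"
  shows "(tri_wave d c has_real_derivative tri_slope d c x) (at x)"
proof -
  let ?t = "tri_phase d c x"
  have c: "-1 < cos ?t" "cos ?t < 1" using abs_cos_less_1[OF assms(2)] by auto
  have sqrt_eq: "sqrt (1 - (cos ?t)^2) = \<bar>sin ?t\<bar>"
    by (simp add: sin_squared_eq[symmetric])
  have phase: "(tri_phase d c has_real_derivative pi / d) (at x)"
    unfolding tri_phase_def[abs_def] using assms(1) by (auto intro!: derivative_eq_intros)
  have "((\<lambda>y. arccos (cos (tri_phase d c y))) has_real_derivative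
      inverse (- sqrt (1 - (cos ?t)^2)) * (- sin ?t * (pi / d))) (at x)"
    using DERIV_chain2[OF DERIV_arccos[OF c] DERIV_chain2[OF DERIV_cos phase]] by simp
  from DERIV_cmult[OF this, of "d / pi"]
  have "(tri_wave d c has_real_derivative
      d / pi * (inverse (- sqrt (1 - (cos ?t)^2)) * (- sin ?t * (pi / d)))) (at x)"
    by (simp add: tri_wave_def[abs_def])
  moreover have "d / pi * (inverse (- sqrt (1 - (cos ?t)^2)) * (- sin ?t * (pi / d)))
      = tri_slope d c x"
    using assms by (simp add: sqrt_eq tri_slope_def sgn_real_def divide_simps)
  ultimately show ?thesis by simp
qed

lemma eventually_tri_phase_sin_nonzero:
  assumes "d > 0" "sin (tri_phase d c x) = 0"
  shows "\<forall>\<^sub>F y in at x. sin (tri_phase d c y) \<noteq> 0"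
  unfolding eventually_at
proof (intro exI[of _ d] conjI ballI impI)
  show "d > 0" by (fact assms(1))
next
  fix y assume y: "y \<noteq> x \<and> dist y x < d"
  define s where "s = pi * (y - x) / d"
  have phase_y: "tri_phase d c y = tri_phase d c x + s"
    using assms(1) by (simp add: tri_phase_def s_def field_simps)
  have "\<bar>s\<bar> = pi * \<bar>y - x\<bar> / d"
    using assms(1) by (simp add: s_def abs_mult abs_divide)
  also have "\<dots> < pi"
    using y assms(1) by (simp add: dist_real_def divide_less_eq)
  finally have "\<bar>s\<bar> < pi" .
  moreover have "s \<noteq> 0" using y assms(1) by (simp add: s_def)
  ultimately have "sin s \<noteq> 0"
    using sin_eq_0_pi[of s] by (auto simp: abs_less_iff)
  moreover have "\<bar>cos (tri_phase d c x)\<bar> = 1"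
    using sin_zero_abs_cos_one[OF assms(2)] .
  ultimately show "sin (tri_phase d c y) \<noteq> 0"
    using assms(2) by (auto simp: phase_y sin_add abs_if split: if_splits)
qed

lemma eventually_tri_slope_eq:
  assumes "d > 0" "sin (tri_phase d c x) \<noteq> 0"
  shows "\<forall>\<^sub>F y in nhds x. tri_slope d c y = tri_slope d c x \<and> sin (tri_phase d c y) \<noteq> 0"
proof -
  let ?S = "{y. 0 < sin (tri_phase d c y) * sin (tri_phase d c x)}"
  have "open ?S"
    unfolding tri_phase_def using assms(1) by (intro open_Collect_less continuous_intros) auto
  moreover have "x \<in> ?S" using assms(2) not_real_square_gt_zero by blast
  ultimately show ?thesis
    by (rule eventually_nhds_in_open[THEN eventually_mono])
       (auto simp: tri_slope_def zero_less_mult_iff)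
qed

lemma tri_slope_sq: "sin (tri_phase d c x) \<noteq> 0 \<Longrightarrow> tri_slope d c x * tri_slope d c x = 1"
  by (simp add: tri_slope_def sgn_real_def)

lemma tri_slope_power_odd: "odd n \<Longrightarrow> tri_slope d c x ^ n = tri_slope d c x"
  by (auto simp: tri_slope_def sgn_real_def odd_pos)

lemma isCont_tri_slope_mult:
  assumes "d > 0" "isCont F x" "sin (tri_phase d c x) = 0 \<Longrightarrow> F x = 0"
  shows "isCont (\<lambda>y. tri_slope d c y * F y) x"
proof (cases "sin (tri_phase d c x) = 0")
  case True
  have "((\<lambda>y. tri_slope d c y * F y) \<longlongrightarrow> 0) (at x)"
  proof (rule Lim_null_comparison)
    show "\<forall>\<^sub>F y in at x. norm (tri_slope d c y * F y) \<le> \<bar>F y\<bar>"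
      by (auto intro!: always_eventually simp: tri_slope_def sgn_real_def abs_mult)
    show "((\<lambda>y. \<bar>F y\<bar>) \<longlongrightarrow> 0) (at x)"
      using tendsto_rabs[OF assms(2)[unfolded isCont_def]] assms(3)[OF True] by simp
  qed
  then show ?thesis using True by (simp add: isCont_def tri_slope_def)
next
  case False
  have "\<forall>\<^sub>F y in nhds x. tri_slope d c y * F y = tri_slope d c x * F y"
    using eventually_tri_slope_eq[OF assms(1) False] by eventually_elim simp
  moreover have "isCont (\<lambda>y. tri_slope d c x * F y) x"
    using assms(2) by (intro continuous_intros)
  ultimately show ?thesis by (metis isCont_cong)
qed

subsection \<open>The profile integral \<open>J\<close> and its inverse\<close>

locale profile_integral =
  fixes m :: nat and c3 :: real
  assumes m_ge_2: "m \<ge> 2" and c3_pos: "0 < c3" and c3_less: "c3 < 1/4"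
begin

abbreviation "B2 \<equiv> b2 c3"
abbreviation "B3 \<equiv> b3 c3"

lemma b2_pos: "0 < B2" and b2_less_b3: "B2 < B3" and b3_less_1: "B3 < 1"
  and b2_add_b3: "B2 + B3 = 1" and b2_mult_b3: "B2 * B3 = c3"
proof -
  define s where "s = sqrt (1 - 4*c3)"
  have "0 < s" "s < 1" "s^2 = 1 - 4*c3"
    using c3_pos c3_less by (auto simp: s_def real_sqrt_lt_1_iff)
  then show "0 < B2" "B2 < B3" "B3 < 1" "B2 + B3 = 1" "B2 * B3 = c3"
    unfolding b2_def b3_def s_def[symmetric] by (auto simp: field_simps power2_eq_square)
qed

definition q :: "real \<Rightarrow> real" where "q y = c3 + y^2"

definition D :: "real \<Rightarrow> real" where "D y = y^(2*m) - q y^(2*m)"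

definition E :: "real \<Rightarrow> real" where "E y = root (2*m) (D y)"

definition g :: "real \<Rightarrow> real" where "g y = (E y / q y)^(2*m-1)"

lemma y_minus_q: "y - q y = (y - B2) * (B3 - y)"
proof -
  have "(y - B2) * (B3 - y) = -(y^2) + (B2 + B3) * y - B2 * B3"
    by (simp add: algebra_simps power2_eq_square)
  then show ?thesis by (simp add: q_def b2_add_b3 b2_mult_b3)
qed

lemma q_pos: "q y > 0"
  using c3_pos by (simp add: q_def add_pos_nonneg)

lemma q_le_self: "y \<in> {B2..B3} \<Longrightarrow> q y \<le> y"
proof -
  assume "y \<in> {B2..B3}"
  then have "(y - B2) * (B3 - y) \<ge> 0" by (intro mult_nonneg_nonneg) auto
  then show ?thesis using y_minus_q[of y] by linarith
qed

lemma q_less_self: "y \<in> {B2<..<B3} \<Longrightarrow> q y < y"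
proof -
  assume "y \<in> {B2<..<B3}"
  then have "(y - B2) * (B3 - y) > 0" by (intro mult_pos_pos) auto
  then show ?thesis using y_minus_q[of y] by linarith
qed

lemma q_eq_self: "y = B2 \<or> y = B3 \<Longrightarrow> q y = y"
  using y_minus_q[of y] by auto

lemma D_pos: "y \<in> {B2<..<B3} \<Longrightarrow> D y > 0"
  using q_less_self[of y] q_pos[of y] m_ge_2 by (simp add: D_def power_strict_mono)

lemma D_nonneg: "y \<in> {B2..B3} \<Longrightarrow> D y \<ge> 0"
  using q_le_self[of y] q_pos[of y] by (simp add: D_def power_mono less_imp_le)

lemma D_endpoints: "y = B2 \<or> y = B3 \<Longrightarrow> D y = 0"
  using q_eq_self by (auto simp: D_def)

text \<open>\<open>D\<close> vanishes at most to first order at \<open>B2\<close>, \<open>B3\<close>; this makes the improper integral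
  \<open>J\<close> converge.\<close>
lemma D_ge:
  assumes "y \<in> {B2..B3}"
  shows "real (2*m) * c3^(2*m-1) * ((y - B2) * (B3 - y)) \<le> D y"
proof -
  have "c3^(2*m-1) \<le> q y^(2*m-1)"
    using c3_pos by (intro power_mono) (auto simp: q_def)
  then have "real (2*m) * c3^(2*m-1) * (y - q y) \<le> real (2*m) * q y^(2*m-1) * (y - q y)"
    using q_le_self[OF assms] by (intro mult_right_mono mult_left_mono) auto
  also have "\<dots> \<le> D y"
    unfolding D_def using q_pos[of y] q_le_self[OF assms]
    by (intro power_diff_ge_mult_power) auto
  finally show ?thesis by (simp add: y_minus_q)
qed

lemma E_pow: "y \<in> {B2..B3} \<Longrightarrow> E y ^ (2*m) = D y"
  using D_nonneg m_ge_2 by (simp add: E_def)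

lemma E_pos: "y \<in> {B2<..<B3} \<Longrightarrow> E y > 0"
  using D_pos m_ge_2 by (simp add: E_def)

lemma E_endpoints: "y = B2 \<or> y = B3 \<Longrightarrow> E y = 0"
  using D_endpoints by (simp add: E_def)

lemma continuous_on_E: "continuous_on UNIV E"
  unfolding E_def D_def q_def by (intro continuous_intros)

lemma g_pos: "y \<in> {B2<..<B3} \<Longrightarrow> g y > 0"
  using q_pos[of y] E_pos[of y] by (simp add: g_def)

lemma g_endpoints: "y = B2 \<or> y = B3 \<Longrightarrow> g y = 0"
  using E_endpoints m_ge_2 by (auto simp: g_def)

lemma continuous_on_g: "continuous_on UNIV g"
  unfolding g_def q_def using q_pos
  by (intro continuous_intros continuous_on_E) (auto simp: q_def less_imp_neq[symmetric])

abbreviation expo :: real where "expo \<equiv> (real (2*m) - 1) / real (2*m)"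

lemma expo_pos: "0 < expo" and expo_less_1: "expo < 1"
  using m_ge_2 by auto

lemma Jint_eq: assumes "y \<in> {B2<..<B3}" shows "Jint m c3 y = 1 / g y"
proof -
  have "D y powr expo = (D y powr (1 / real (2*m))) powr real (2*m-1)"
    using m_ge_2 by (simp add: powr_powr of_nat_diff)
  also have "D y powr (1 / real (2*m)) = E y"
    using D_pos[OF assms] m_ge_2 by (simp add: E_def root_powr_inverse)
  also have "E y powr real (2*m-1) = E y ^ (2*m-1)"
    using E_pos[OF assms] by (simp add: powr_realpow)
  finally have "D y powr expo = E y ^ (2*m-1)" .
  then show ?thesis
    using q_pos[of y] by (simp add: Jint_def D_def q_def g_def power_divide)
qed

lemma Jint_pos: "y \<in> {B2<..<B3} \<Longrightarrow> Jint m c3 y > 0"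
  using g_pos by (simp add: Jint_eq)

lemma continuous_on_Jint: "continuous_on {B2<..<B3} (Jint m c3)"
proof -
  have "continuous_on {B2<..<B3} (\<lambda>y. 1 / g y)"
    using g_pos
    by (intro continuous_intros continuous_on_subset[OF continuous_on_g])
       (auto simp: less_imp_neq[symmetric])
  then show ?thesis by (rule continuous_on_eq) (simp add: Jint_eq)
qed

lemma Jint_le:
  obtains C where "\<And>y. y \<in> {B2<..<B3} \<Longrightarrow>
    Jint m c3 y \<le> C * ((y - B2) powr (-expo) + (B3 - y) powr (-expo))"
proof
  define K where "K = real (2*m) * c3^(2*m-1)"
  have K: "K > 0" using m_ge_2 c3_pos by (simp add: K_def)
  fix y assume y: "y \<in> {B2<..<B3}"
  define x w where "x = y - B2" and "w = B3 - y"
  have x: "x > 0" and w: "w > 0" using y by (auto simp: x_def w_def)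
  have "q y^(2*m-1) \<le> 1"
    using q_pos[of y] q_le_self[of y] y b3_less_1 by (intro power_le_one) auto
  then have "Jint m c3 y \<le> 1 / D y powr expo"
    using D_pos[OF y] by (simp add: Jint_def D_def q_def divide_right_mono)
  also have "\<dots> \<le> 1 / (K * (x * w)) powr expo"
    using D_ge[of y] D_pos[OF y] y K x w expo_pos m_ge_2 c3_pos
    by (intro divide_left_mono powr_mono2 mult_pos_pos) (auto simp: K_def x_def w_def)
  also have "\<dots> = K powr (-expo) * (x powr (-expo) * w powr (-expo))"
    using K x w by (simp add: powr_mult powr_minus divide_simps)
  also have "\<dots> \<le> K powr (-expo) * (((x + w) / 2) powr (-expo) * (x powr (-expo) + w powr (-expo)))"
    using powr_neg_mult_le[OF x w, of expo] expo_pos by (intro mult_left_mono) auto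
  finally show "Jint m c3 y \<le> K powr (-expo) * ((B3 - B2) / 2) powr (-expo)
      * ((y - B2) powr (-expo) + (B3 - y) powr (-expo))"
    by (simp add: x_def w_def mult.assoc)
qed

lemma Jint_integrable: "Jint m c3 integrable_on {B2..B3}"
proof -
  obtain C where C: "\<And>y. y \<in> {B2<..<B3} \<Longrightarrow>
      Jint m c3 y \<le> C * ((y - B2) powr (-expo) + (B3 - y) powr (-expo))"
    using Jint_le by blast
  have "(\<lambda>y. (y - B2) powr (-expo) + (B3 - y) powr (-expo)) integrable_on {B2..B3}"
    using b2_less_b3 expo_less_1
    by (intro integrable_add integrable_on_powr_diff_left integrable_on_powr_diff_right) auto
  from integrable_on_cmult_left[OF this, of C]
  have bound_integrable:
    "(\<lambda>y. C * ((y - B2) powr (-expo) + (B3 - y) powr (-expo))) integrable_on {B2<..<B3}"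
    by (simp add: integrable_on_Icc_iff_Ioo)
  have "Jint m c3 integrable_on {B2<..<B3}"
  proof (rule measurable_bounded_by_integrable_imp_integrable_real[OF _ bound_integrable])
    show "Jint m c3 \<in> borel_measurable (lebesgue_on {B2<..<B3})"
      by (intro continuous_imp_measurable_on_sets_lebesgue continuous_on_Jint) auto
    fix y assume "y \<in> {B2<..<B3}"
    then show "\<bar>Jint m c3 y\<bar> \<le> C * ((y - B2) powr (-expo) + (B3 - y) powr (-expo))"
      using C Jint_pos by (simp add: less_imp_le)
  qed simp
  then show ?thesis by (simp add: integrable_on_Icc_iff_Ioo)
qed

lemma J_B2: "J m c3 B2 = 0"
  by (simp add: J_def)

lemma continuous_on_J: "continuous_on {B2..B3} (J m c3)"
  unfolding J_def by (rule indefinite_integral_continuous_1[OF Jint_integrable])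

lemma J_has_real_derivative:
  assumes "y \<in> {B2<..<B3}"
  shows "(J m c3 has_real_derivative Jint m c3 y) (at y)"
proof -
  have "((\<lambda>u. integral {B2..u} (Jint m c3)) has_vector_derivative Jint m c3 y)
      (at y within ({B2..B3} - {}))"
    using assms continuous_on_Jint
    by (intro integral_has_vector_derivative_continuous_at Jint_integrable)
       (auto simp: continuous_on_eq_continuous_at continuous_at_imp_continuous_within)
  then have "((\<lambda>u. integral {B2..u} (Jint m c3)) has_vector_derivative Jint m c3 y) (at y)"
    using assms by (subst (asm) at_within_interior) auto
  then show ?thesis
    by (simp add: J_def[abs_def] has_real_derivative_iff_has_vector_derivative)
qed

lemma strict_mono_on_J: "strict_mono_on {B2..B3} (J m c3)"
proof (rule strict_mono_onI)
  fix x y assume xy: "x \<in> {B2..B3}" "y \<in> {B2..B3}" "x < y"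
  show "J m c3 x < J m c3 y"
  proof (rule DERIV_pos_imp_increasing_open[OF xy(3)])
    fix z assume "x < z" "z < y"
    then have z: "z \<in> {B2<..<B3}" using xy by auto
    show "\<exists>l. (J m c3 has_real_derivative l) (at z) \<and> l > 0"
      using J_has_real_derivative[OF z] Jint_pos[OF z] by blast
  qed (rule continuous_on_subset[OF continuous_on_J], use xy in auto)
qed

lemma d2_pos: "d2 m c3 > 0"
  using strict_mono_onD[OF strict_mono_on_J, of B2 B3] b2_less_b3 J_B2
  by (simp add: d2_def)

lemma J_in_range: "\<alpha> \<in> {B2..B3} \<Longrightarrow> J m c3 \<alpha> \<in> {0..d2 m c3}"
  using strict_mono_on_leD[OF strict_mono_on_J, of B2 \<alpha>] strict_mono_on_leD[OF strict_mono_on_J, of \<alpha> B3]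
    b2_less_b3 J_B2
  by (auto simp: d2_def)

lemma ex1_J_eq:
  assumes "y \<in> {0..d2 m c3}"
  shows "\<exists>!\<alpha>. \<alpha> \<in> {B2..B3} \<and> J m c3 \<alpha> = y"
proof -
  obtain x where "x \<in> {B2..B3}" "J m c3 x = y"
    using IVT'[of "J m c3" B2 y B3] assms J_B2 continuous_on_J b2_less_b3 by (auto simp: d2_def)
  then show ?thesis
    using strict_mono_on_eqD[OF strict_mono_on_J] by blast
qed

definition Jinv :: "real \<Rightarrow> real" where
  "Jinv y = (THE \<alpha>. \<alpha> \<in> {B2..B3} \<and> J m c3 \<alpha> = y)"

lemma Jinv_in_range: "y \<in> {0..d2 m c3} \<Longrightarrow> Jinv y \<in> {B2..B3}"
  and J_Jinv: "y \<in> {0..d2 m c3} \<Longrightarrow> J m c3 (Jinv y) = y"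
  using theI'[OF ex1_J_eq] unfolding Jinv_def by auto

lemma Jinv_J: "\<alpha> \<in> {B2..B3} \<Longrightarrow> Jinv (J m c3 \<alpha>) = \<alpha>"
  using ex1_J_eq[OF J_in_range] unfolding Jinv_def by (auto intro: the_equality)

lemma continuous_on_Jinv: "continuous_on {0..d2 m c3} Jinv"
proof -
  have "J m c3 ` {B2..B3} = {0..d2 m c3}"
  proof
    show "J m c3 ` {B2..B3} \<subseteq> {0..d2 m c3}" using J_in_range by auto
    show "{0..d2 m c3} \<subseteq> J m c3 ` {B2..B3}" using Jinv_in_range J_Jinv by (metis image_eqI subsetI)
  qed
  then show ?thesis
    using continuous_on_inv[OF continuous_on_J compact_Icc, of Jinv] Jinv_J by auto
qed

lemma Jinv_endpoints: "Jinv 0 = B2" "Jinv (d2 m c3) = B3"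
  using Jinv_J[of B2] Jinv_J[of B3] J_B2 b2_less_b3 by (auto simp: d2_def)

lemma Jinv_interior:
  assumes "y \<in> {0<..<d2 m c3}"
  shows "Jinv y \<in> {B2<..<B3}"
proof -
  have "Jinv y \<in> {B2..B3}" "J m c3 (Jinv y) = y"
    using assms Jinv_in_range J_Jinv by auto
  moreover have "Jinv y \<noteq> B2" "Jinv y \<noteq> B3"
    using calculation assms J_B2 by (auto simp: d2_def)
  ultimately show ?thesis by auto
qed

lemma Jinv_has_real_derivative:
  assumes y: "y \<in> {0<..<d2 m c3}"
  shows "(Jinv has_real_derivative g (Jinv y)) (at y)"
proof -
  have J': "Jinv y \<in> {B2<..<B3}" by (rule Jinv_interior[OF y])
  have "(Jinv has_real_derivative inverse (Jint m c3 (Jinv y))) (at y)"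
  proof (rule DERIV_inverse_function[where f = "J m c3" and a = 0 and b = "d2 m c3"])
    show "(J m c3 has_real_derivative Jint m c3 (Jinv y)) (at (Jinv y))"
      by (rule J_has_real_derivative[OF J'])
    show "isCont Jinv y"
      using y by (intro continuous_on_interior[OF continuous_on_Jinv]) auto
    show "Jint m c3 (Jinv y) \<noteq> 0" using Jint_pos[OF J'] by simp
    show "0 < y" "y < d2 m c3" using y by auto
    show "\<And>z. 0 < z \<Longrightarrow> z < d2 m c3 \<Longrightarrow> J m c3 (Jinv z) = z" using J_Jinv by auto
  qed
  then show ?thesis using Jint_eq[OF J'] g_pos[OF J'] by simp
qed

subsection \<open>Derivatives along the profile\<close>

abbreviation N :: nat where "N \<equiv> 2*m - 1"

lemma Suc_N: "Suc N = 2*m"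
  using m_ge_2 by simp

definition D' :: "real \<Rightarrow> real" where
  "D' y = real (2*m) * y^N - real (4*m) * y * q y^N"

definition E' :: "real \<Rightarrow> real" where
  "E' y = D' y / (real (2*m) * E y ^ N)"

definition g' :: "real \<Rightarrow> real" where
  "g' y = real N * (E y / q y)^(N-1) * ((E' y * q y - E y * (2*y)) / (q y * q y))"

text \<open>\<open>h = g g'\<close> on \<open>]B2, B3[\<close>, written in a form that is continuous on all of \<open>\<real>\<close>
  (\<open>N - 1 > 0\<close>).\<close>
definition h :: "real \<Rightarrow> real" where
  "h y = real N * (E y^(N-1) * D' y / real (2*m) - 2*y*E y^(2*N) / q y) / q y^(2*N)"

definition P :: "real \<Rightarrow> real" where "P y = E y / y"

definition P' :: "real \<Rightarrow> real" where "P' y = (E' y * y - E y) / (y*y)"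

lemma q_has_real_derivative: "(q has_real_derivative 2*y) (at y)"
  unfolding q_def[abs_def] by (auto intro!: derivative_eq_intros)

lemma D_has_real_derivative: "(D has_real_derivative D' y) (at y)"
proof -
  have "((\<lambda>y. y^(2*m) - q y^(2*m)) has_real_derivative
      real (2*m) * y^(2*m - Suc 0) - real (2*m) * (2*y * q y^(2*m - Suc 0))) (at y)"
    by (rule DERIV_diff[OF DERIV_pow DERIV_power[OF q_has_real_derivative]])
  moreover have "real (2*m) * y^(2*m - Suc 0) - real (2*m) * (2*y * q y^(2*m - Suc 0)) = D' y"
    by (simp add: D'_def)
  ultimately show ?thesis by (simp add: D_def[abs_def])
qed

lemma E_has_real_derivative:
  assumes "y \<in> {B2<..<B3}"
  shows "(E has_real_derivative E' y) (at y)"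
proof -
  have "0 < 2*m" "0 < D y" using D_pos[OF assms] m_ge_2 by auto
  have "((\<lambda>y. root (2*m) (D y)) has_real_derivative
      inverse (real (2*m) * root (2*m) (D y) ^ (2*m - Suc 0)) * D' y) (at y)"
    by (rule DERIV_chain2[OF DERIV_real_root[OF \<open>0 < 2*m\<close> \<open>0 < D y\<close>] D_has_real_derivative])
  moreover have "inverse (real (2*m) * root (2*m) (D y) ^ (2*m - Suc 0)) * D' y = E' y"
    unfolding E'_def E_def by (simp only: divide_inverse mult.commute One_nat_def)
  ultimately show ?thesis by (simp add: E_def[abs_def])
qed

lemma g_has_real_derivative:
  assumes "y \<in> {B2<..<B3}"
  shows "(g has_real_derivative g' y) (at y)"
proof -
  have "q y \<noteq> 0" using q_pos[of y] by simp
  from DERIV_power[OF DERIV_divide[OF E_has_real_derivative[OF assms] q_has_real_derivative this], of N]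
  show ?thesis
    by (simp add: g_def[abs_def] g'_def mult_ac)
qed

lemma g_mult_g'_algebra:
  fixes e Q y Dp M :: real and n :: nat
  assumes "e > 0" "Q > 0" "M > 0"
  shows "(e/Q)^Suc n * (real (Suc n) * (e/Q)^n * (((Dp / (M * e^Suc n)) * Q - e * (2*y)) / (Q*Q)))
       = real (Suc n) * (e^n * Dp / M - 2*y*e^(2*Suc n)/Q) / Q^(2*Suc n)"
proof -
  define u w where "u = e^n" and "w = Q^n"
  have "u > 0" "w > 0" using assms by (simp_all add: u_def w_def)
  have pow: "e^(2*Suc n) = (e*u) * (e*u)" "Q^(2*Suc n) = (Q*w) * (Q*w)"
    by (simp_all add: u_def w_def power_add[symmetric] mult_2 del: power_Suc)
       (simp_all add: power_add)
  have "(e/Q)^Suc n = e*u/(Q*w)" "(e/Q)^n = u/w" "e^Suc n = e*u"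
    by (simp_all add: u_def w_def power_divide)
  then show ?thesis
    unfolding pow using assms \<open>u > 0\<close> \<open>w > 0\<close> by (simp add: field_simps)
qed

lemma g_mult_g': assumes "y \<in> {B2<..<B3}" shows "g y * g' y = h y"
proof -
  obtain n where n: "N = Suc n" using m_ge_2 by (cases N) auto
  have "g y * g' y = (E y/q y)^Suc n * (real (Suc n) * (E y/q y)^n *
      (((D' y / (real (2*m) * E y^Suc n)) * q y - E y * (2*y)) / (q y*q y)))"
    unfolding g_def g'_def E'_def n by simp
  also have "\<dots> = h y"
    unfolding h_def n using E_pos[OF assms] q_pos[of y] m_ge_2
    by (subst g_mult_g'_algebra) auto
  finally show ?thesis .
qed

lemma continuous_on_h: "continuous_on UNIV h"
proof -
  have "continuous_on UNIV q" "continuous_on UNIV D'"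
    unfolding q_def[abs_def] D'_def[abs_def] by (intro continuous_intros)+
  then show ?thesis
    unfolding h_def using q_pos m_ge_2
    by (intro continuous_intros continuous_on_E) (auto simp: less_imp_neq[symmetric])
qed

lemma P_has_real_derivative:
  assumes "y \<in> {B2<..<B3}"
  shows "(P has_real_derivative P' y) (at y)"
proof -
  have "y \<noteq> 0" using assms b2_pos by auto
  from DERIV_divide[OF E_has_real_derivative[OF assms] DERIV_ident this]
  show ?thesis by (simp add: P_def[abs_def] P'_def)
qed

lemma P'_mult_g_algebra:
  fixes e Q y u w Y Dp M :: real
  assumes "e > 0" "Q > 0" "y > 0" "u > 0" "w > 0" "M > 0"
    and r1: "u * e = Y * y - w * Q" and r2: "Dp = M * Y - 2 * M * y * w"
  shows "((Dp / (M * u)) * y - e) / (y*y) * (u/w) = (Q - 2*y*y)/(y*y)"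
proof -
  have "((Dp / (M * u)) * y - e) / (y*y) * (u/w) = (Dp * y / M - u * e) / (y*y*w)"
    using assms by (simp add: field_simps)
  also have "Dp * y / M = Y * y - 2 * y * y * w"
    using assms(6) unfolding r2 by (simp add: field_simps)
  also have "(Y * y - 2 * y * y * w - u * e) / (y*y*w) = (Q - 2*y*y)/(y*y)"
    unfolding r1 using assms by (simp add: field_simps)
  finally show ?thesis .
qed

lemma P'_mult_g: assumes y: "y \<in> {B2<..<B3}" shows "P' y * g y = c3 / y^2 - 1"
proof -
  have y_pos: "y > 0" using y b2_pos by auto
  have "x ^ (2*m) = x^N * x" for x :: real
    by (metis Suc_N power_Suc2)
  then have r1: "E y^N * E y = y^N * y - q y^N * q y"
    using E_pow[of y] y by (simp add: D_def)
  have r2: "D' y = real (2*m) * y^N - 2 * real (2*m) * y * q y^N"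
    by (simp add: D'_def)
  have "P' y * g y = ((D' y / (real (2*m) * E y ^ N)) * y - E y) / (y*y) * (E y^N / q y^N)"
    by (simp add: P'_def E'_def g_def power_divide)
  also have "\<dots> = (q y - 2*y*y)/(y*y)"
    using P'_mult_g_algebra[OF E_pos[OF y] q_pos y_pos _ _ _ r1 r2] E_pos[OF y] q_pos[of y] m_ge_2
    by simp
  also have "\<dots> = c3/y^2 - 1"
    using y_pos by (simp add: q_def field_simps power2_eq_square)
  finally show ?thesis .
qed

lemma continuous_on_P: "continuous_on {0<..} P"
  unfolding P_def
  by (intro continuous_intros continuous_on_subset[OF continuous_on_E]) auto

lemma P_endpoints: "y = B2 \<or> y = B3 \<Longrightarrow> P y = 0"
  using E_endpoints[of y] by (auto simp: P_def)

end


subsection \<open>The periodic profile \<open>\<alpha>*\<close>\<close>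

locale periodic_profile = profile_integral +
  fixes c5 :: real
begin

abbreviation d :: real where "d \<equiv> d2 m c3"

abbreviation corner :: "real \<Rightarrow> bool" where "corner x \<equiv> sin (tri_phase d c5 x) = 0"

abbreviation sg :: "real \<Rightarrow> real" where "sg \<equiv> tri_slope d c5"

definition alpha :: "real \<Rightarrow> real" where "alpha x = Jinv (tri_wave d c5 x)"

definition alpha' :: "real \<Rightarrow> real" where "alpha' x = sg x * g (alpha x)"

lemma alpha_range: "alpha x \<in> {B2..B3}"
  using Jinv_in_range tri_wave_range[OF d2_pos] by (simp add: alpha_def)

lemma alpha_pos: "alpha x > 0"
  using alpha_range[of x] b2_pos by auto

lemma continuous_on_alpha: "continuous_on UNIV alpha"
proof -
  have "tri_wave d c5 ` UNIV \<subseteq> {0..d}" using tri_wave_range[OF d2_pos] by auto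
  from continuous_on_compose2[OF continuous_on_Jinv continuous_on_tri_wave[OF d2_pos] this]
  show ?thesis by (simp add: alpha_def[abs_def])
qed

lemma isCont_alpha: "isCont alpha x"
  using continuous_on_alpha by (simp add: continuous_on_eq_continuous_at)

lemma alpha_periodic: "alpha (x + 2 * d) = alpha x"
  by (simp add: alpha_def tri_wave_periodic[OF d2_pos])

lemma alpha_interior: "\<not> corner x \<Longrightarrow> alpha x \<in> {B2<..<B3}"
  using Jinv_interior tri_wave_off_corner[OF d2_pos] by (simp add: alpha_def)

lemma alpha_corner: "corner x \<Longrightarrow> alpha x = B2 \<or> alpha x = B3"
  using tri_wave_corner[OF d2_pos, of c5 x] Jinv_endpoints by (auto simp: alpha_def)

lemma isCont_comp_alpha:
  assumes "continuous_on {B2..B3} F"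
  shows "isCont (\<lambda>y. F (alpha y)) x"
proof -
  have "alpha ` UNIV \<subseteq> {B2..B3}" using alpha_range by auto
  from continuous_on_compose2[OF assms continuous_on_alpha this]
  show ?thesis by (simp add: continuous_on_eq_continuous_at)
qed

lemma isCont_sg_mult_comp_alpha:
  assumes "continuous_on {B2..B3} F" "F B2 = 0" "F B3 = 0"
  shows "isCont (\<lambda>y. sg y * F (alpha y)) x"
  using isCont_tri_slope_mult[OF d2_pos isCont_comp_alpha[OF assms(1)]] alpha_corner assms(2,3)
  by metis

lemma isCont_alpha': "isCont alpha' x"
  unfolding alpha'_def[abs_def]
  by (intro isCont_sg_mult_comp_alpha continuous_on_subset[OF continuous_on_g] g_endpoints) auto

lemma alpha_has_real_derivative: "(alpha has_real_derivative alpha' x) (at x)"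
proof -
  have off_corner: "(alpha has_real_derivative alpha' y) (at y)" if "\<not> corner y" for y
    using DERIV_chain2[OF Jinv_has_real_derivative[OF tri_wave_off_corner[OF d2_pos that]]
        has_real_derivative_tri_wave[OF d2_pos that]]
    by (simp add: alpha_def[abs_def] alpha'_def mult.commute)
  show ?thesis
  proof (cases "corner x")
    case True
    show ?thesis
    proof (rule DERIV_of_tendsto_deriv[OF isCont_alpha])
      show "\<forall>\<^sub>F y in at x. (alpha has_real_derivative alpha' y) (at y)"
        using eventually_tri_phase_sin_nonzero[OF d2_pos True] by eventually_elim (rule off_corner)
      show "(alpha' \<longlongrightarrow> alpha' x) (at x)"
        using isCont_alpha' by (simp add: isCont_def)
    qed
  qed (rule off_corner)
qed

text \<open>Off the corners \<open>sg\<close> is locally constant with \<open>sg\<^sup>2 = 1\<close>, so the chain rule produces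
  \<open>F'(\<alpha>) \<alpha>' sg = F'(\<alpha>) g(\<alpha>)\<close>; at the corners the derivative is obtained as a limit.\<close>
lemma sg_mult_comp_alpha_has_real_derivative:
  assumes F: "continuous_on {B2..B3} F" "F B2 = 0" "F B3 = 0"
    and F': "\<And>y. y \<in> {B2<..<B3} \<Longrightarrow> (F has_real_derivative F' y) (at y)"
    and H: "\<And>y. y \<in> {B2<..<B3} \<Longrightarrow> F' y * g y = H y" "continuous_on {B2..B3} H"
  shows "((\<lambda>y. sg y * F (alpha y)) has_real_derivative H (alpha x)) (at x)"
proof -
  have off_corner: "((\<lambda>y. sg y * F (alpha y)) has_real_derivative H (alpha y)) (at y)"
    if y: "\<not> corner y" for y
  proof -
    have "((\<lambda>z. sg y * F (alpha z)) has_real_derivative sg y * (F' (alpha y) * alpha' y)) (at y)"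
      by (intro DERIV_cmult DERIV_chain2[OF F'[OF alpha_interior[OF y]] alpha_has_real_derivative])
    moreover have "sg y * (F' (alpha y) * alpha' y) = F' (alpha y) * g (alpha y) * (sg y * sg y)"
      by (simp add: alpha'_def mult_ac)
    ultimately have "((\<lambda>z. sg y * F (alpha z)) has_real_derivative H (alpha y)) (at y)"
      using H(1)[OF alpha_interior[OF y]] tri_slope_sq[OF y] by simp
    moreover have ev: "\<forall>\<^sub>F z in nhds y. sg z * F (alpha z) = sg y * F (alpha z)"
      using eventually_tri_slope_eq[OF d2_pos y] by eventually_elim simp
    ultimately show ?thesis by (simp only: DERIV_cong_ev[OF refl ev refl])
  qed
  show ?thesis
  proof (cases "corner x")
    case True
    show ?thesis
    proof (rule DERIV_of_tendsto_deriv[OF isCont_sg_mult_comp_alpha[OF F]])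
      show "\<forall>\<^sub>F y in at x. ((\<lambda>y. sg y * F (alpha y)) has_real_derivative H (alpha y)) (at y)"
        using eventually_tri_phase_sin_nonzero[OF d2_pos True] by eventually_elim (rule off_corner)
      show "((\<lambda>y. H (alpha y)) \<longlongrightarrow> H (alpha x)) (at x)"
        using isCont_comp_alpha[OF H(2)] by (simp add: isCont_def)
    qed
  qed (rule off_corner)
qed

lemma alpha'_has_real_derivative: "(alpha' has_real_derivative h (alpha x)) (at x)"
  unfolding alpha'_def[abs_def]
  using g_has_real_derivative g_mult_g' g_endpoints
  by (intro sg_mult_comp_alpha_has_real_derivative continuous_on_subset[OF continuous_on_g]
        continuous_on_subset[OF continuous_on_h]) (auto simp: mult.commute)

lemma C2_real_alpha: "C2_real alpha"
proof -
  have "deriv alpha = alpha'" "deriv alpha' = (\<lambda>x. h (alpha x))"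
    using alpha_has_real_derivative alpha'_has_real_derivative by (simp_all add: DERIV_imp_deriv fun_eq_iff)
  moreover have "continuous_on UNIV (\<lambda>x. h (alpha x))"
    using isCont_comp_alpha[OF continuous_on_subset[OF continuous_on_h]]
    by (simp add: continuous_on_eq_continuous_at)
  ultimately show ?thesis
    unfolding C2_real_def
    using alpha_has_real_derivative alpha'_has_real_derivative real_differentiable_def by metis
qed

lemma is_alpha_star_alpha: "is_alpha_star m c3 c5 alpha"
  unfolding is_alpha_star_def alpha_hat_def alpha_def Jinv_def
  by (simp add: tri_wave_shift[OF d2_pos])

lemma is_alpha_star_imp_eq:
  assumes "is_alpha_star m c3 c5 a"
  shows "a = alpha"
proof
  fix x
  define k where "k = \<lfloor>(x - c5 + d) / (2*d)\<rfloor>"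
  define u where "u = x - 2 * real_of_int k * d"
  have "real_of_int k \<le> (x - c5 + d) / (2*d)" "(x - c5 + d) / (2*d) < real_of_int k + 1"
    unfolding k_def by linarith+
  then have u: "u \<in> {c5 - d..c5 + d}"
    using d2_pos by (auto simp: u_def field_simps)
  have x: "x = u + 2 * real_of_int k * d" by (simp add: u_def)
  have "a x = alpha_hat m c3 c5 u"
    using assms u unfolding is_alpha_star_def x by blast
  also have "\<dots> = alpha x"
    unfolding x alpha_hat_def alpha_def Jinv_def tri_wave_shift[OF d2_pos u] ..
  finally show "a x = alpha x" .
qed

end


subsection \<open>The Birkhoff--Gauss map of the surface of revolution\<close>

lemma vector3_eq_axis:
  "(vector [x, y, z] :: real^3) = x *\<^sub>R axis 1 1 + y *\<^sub>R axis 2 1 + z *\<^sub>R axis 3 1"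
  by (simp add: vec_eq_iff forall_3 axis_def)

lemma has_derivative_vector3:
  assumes "(f1 has_derivative f1') F" "(f2 has_derivative f2') F" "(f3 has_derivative f3') F"
  shows "((\<lambda>p. vector [f1 p, f2 p, f3 p] :: real^3) has_derivative
    (\<lambda>h. vector [f1' h, f2' h, f3' h])) F"
  unfolding vector3_eq_axis by (intro has_derivative_add has_derivative_scaleR_left assms)

lemma has_vector_derivative_vector3:
  assumes "(f1 has_real_derivative e1) F" "(f2 has_real_derivative e2) F"
    "(f3 has_real_derivative e3) F"
  shows "((\<lambda>p. vector [f1 p, f2 p, f3 p] :: real^3) has_vector_derivative vector [e1, e2, e3]) F"
proof -
  have "((\<lambda>p. vector [f1 p, f2 p, f3 p] :: real^3) has_derivative
      (\<lambda>h. vector [e1 * h, e2 * h, e3 * h])) F"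
    using assms by (intro has_derivative_vector3) (auto simp: has_field_derivative_def)
  moreover have "(\<lambda>h. vector [e1 * h, e2 * h, e3 * h] :: real^3) = (\<lambda>h. h *\<^sub>R vector [e1, e2, e3])"
    by (simp add: fun_eq_iff vec_eq_iff forall_3)
  ultimately show ?thesis by (simp add: has_vector_derivative_def)
qed

lemma has_derivative_vec_nth [derivative_intros]: "((\<lambda>x. x $ i) has_derivative (\<lambda>h. h $ i)) F"
  by (rule bounded_linear_imp_has_derivative) (rule bounded_linear_vec_nth)

lemma pd_u_eq:
  "((\<lambda>u. G (u, snd p)) has_vector_derivative G') (at (fst p)) \<Longrightarrow> pd_u G p = G'"
  by (simp add: pd_u_def vector_derivative_at)

lemma pd_v_eq:
  "p \<in> pdom \<Longrightarrow> ((\<lambda>v. G (fst p, v)) has_vector_derivative G') (at (snd p)) \<Longrightarrow> pd_v G p = G'"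
  unfolding pd_v_def by (rule vector_derivative_at_within_ivl) (auto simp: pdom_def)

definition grad_Phi :: "nat \<Rightarrow> real^3 \<Rightarrow> real^3" where
  "grad_Phi m x = vector [real (2*m) * ((x$1)^2 + (x$2)^2)^(m-1) * x$1,
                          real (2*m) * ((x$1)^2 + (x$2)^2)^(m-1) * x$2,
                          real (2*m) * (x$3)^(2*m-1)]"

lemma has_gderiv_Phi: "GDERIV (Phi m) x :> grad_Phi m x"
  unfolding gderiv_def Phi_def[abs_def]
  by (auto intro!: derivative_eq_intros simp: grad_Phi_def inner_vec_def sum_3 fun_eq_iff algebra_simps)

lemma cross3_rotation:
  assumes "(cs::real)^2 + sn^2 = 1"
  shows "cross3 (vector [b * cs, b * sn, 1]) (vector [- (a * sn), a * cs, 0])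
    = (vector [- (a * cs), - (a * sn), a * b] :: real^3)"
proof -
  have "b * cs * (a * cs) + b * sn * (a * sn) = a * b * (cs^2 + sn^2)"
    by (simp add: power2_eq_square algebra_simps)
  then show ?thesis using assms by (simp add: cross3_simps)
qed

context periodic_profile
begin

definition R :: "real \<Rightarrow> real" where "R x = q (alpha x) / alpha x"

definition Z :: "real \<Rightarrow> real" where "Z x = sg x * P (alpha x)"

definition eta :: "real \<times> real \<Rightarrow> real^3" where
  "eta p = vector [- (R (fst p) * cos (snd p)), - (R (fst p) * sin (snd p)), Z (fst p)]"

lemma R_has_real_derivative: "(R has_real_derivative (1 - c3 / (alpha x)^2) * alpha' x) (at x)"
proof -
  have a: "alpha x \<noteq> 0" using alpha_pos[of x] by simp
  have "(R has_real_derivative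
      (2 * alpha x * alpha' x * alpha x - q (alpha x) * alpha' x) / (alpha x * alpha x)) (at x)"
    using DERIV_divide[OF DERIV_chain2[OF q_has_real_derivative alpha_has_real_derivative]
        alpha_has_real_derivative a]
    by (simp add: R_def[abs_def] mult_ac)
  moreover have "(2 * alpha x * alpha' x * alpha x - q (alpha x) * alpha' x) / (alpha x * alpha x)
      = (1 - c3 / (alpha x)^2) * alpha' x"
    using a by (simp add: q_def field_simps power2_eq_square)
  ultimately show ?thesis by simp
qed

lemma Z_has_real_derivative: "(Z has_real_derivative c3 / (alpha x)^2 - 1) (at x)"
proof -
  have "continuous_on {B2..B3} (\<lambda>y. c3 / y^2 - 1)"
    using b2_pos by (intro continuous_intros) auto
  then show ?thesis
    unfolding Z_def[abs_def]
    using P_has_real_derivative P'_mult_g P_endpoints b2_pos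
    by (intro sg_mult_comp_alpha_has_real_derivative continuous_on_subset[OF continuous_on_P]) auto
qed

lemma pd_u_rot_surf:
  "pd_u (rot_surf alpha) p = vector [alpha' (fst p) * cos (snd p), alpha' (fst p) * sin (snd p), 1]"
proof -
  have "((\<lambda>u. vector [alpha u * cos (snd p), alpha u * sin (snd p), u] :: real^3)
      has_vector_derivative vector [alpha' (fst p) * cos (snd p), alpha' (fst p) * sin (snd p), 1])
      (at (fst p))"
    by (intro has_vector_derivative_vector3 DERIV_cmult_right alpha_has_real_derivative DERIV_ident)
  then show ?thesis by (intro pd_u_eq) (simp add: rot_surf_def)
qed

lemma pd_v_rot_surf:
  "p \<in> pdom \<Longrightarrow>
    pd_v (rot_surf alpha) p = vector [- (alpha (fst p) * sin (snd p)), alpha (fst p) * cos (snd p), 0]"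
  unfolding rot_surf_def
  using pd_v_eq[of p "\<lambda>p. vector [alpha (fst p) * cos (snd p), alpha (fst p) * sin (snd p), fst p]"]
    has_vector_derivative_vector3[OF DERIV_cmult[OF DERIV_cos] DERIV_cmult[OF DERIV_sin] DERIV_const]
  by simp

lemma pd_u_eta:
  "pd_u eta p = vector [- ((1 - c3 / (alpha (fst p))^2) * alpha' (fst p) * cos (snd p)),
    - ((1 - c3 / (alpha (fst p))^2) * alpha' (fst p) * sin (snd p)), c3 / (alpha (fst p))^2 - 1]"
proof -
  have "((\<lambda>u. vector [- (R u * cos (snd p)), - (R u * sin (snd p)), Z u] :: real^3)
      has_vector_derivative vector [- ((1 - c3 / (alpha (fst p))^2) * alpha' (fst p) * cos (snd p)),
        - ((1 - c3 / (alpha (fst p))^2) * alpha' (fst p) * sin (snd p)), c3 / (alpha (fst p))^2 - 1])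
      (at (fst p))"
    by (intro has_vector_derivative_vector3 DERIV_minus DERIV_cmult_right
          R_has_real_derivative Z_has_real_derivative)
  then show ?thesis by (intro pd_u_eq) (simp add: eta_def)
qed

lemma pd_v_eta:
  assumes "p \<in> pdom"
  shows "pd_v eta p = vector [R (fst p) * sin (snd p), - (R (fst p) * cos (snd p)), 0]"
proof -
  have "((\<lambda>v. vector [- (R (fst p) * cos v), - (R (fst p) * sin v), Z (fst p)] :: real^3)
      has_vector_derivative vector [- (R (fst p) * - sin (snd p)), - (R (fst p) * cos (snd p)), 0])
      (at (snd p))"
    by (intro has_vector_derivative_vector3 DERIV_minus DERIV_cmult DERIV_cos DERIV_sin DERIV_const)
  then show ?thesis by (intro pd_v_eq[OF assms]) (simp add: eta_def)
qed

lemma R_pos: "R x > 0"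
  using alpha_pos q_pos by (simp add: R_def)

lemma R_pow_add_Z_pow: "R x ^ (2*m) + Z x ^ (2*m) = 1"
proof (cases "corner x")
  case True
  then have "q (alpha x) = alpha x" using q_eq_self alpha_corner by blast
  then show ?thesis using alpha_pos[of x] m_ge_2 by (simp add: R_def Z_def tri_slope_def True)
next
  case False
  have "sg x ^ (2*m) = 1"
    using tri_slope_sq[OF False] by (simp add: power_mult power2_eq_square)
  moreover have "E (alpha x) ^ (2*m) = alpha x ^ (2*m) - q (alpha x) ^ (2*m)"
    using E_pow[OF alpha_range] by (simp add: D_def)
  ultimately show ?thesis
    using alpha_pos[of x]
    by (simp add: R_def Z_def P_def power_mult_distrib power_divide add_divide_distrib[symmetric])
qed

text \<open>This identity says that \<open>\<nabla>\<Phi>(\<eta>)\<close> is parallel to \<open>f\<^sub>u \<times> f\<^sub>v\<close>.\<close>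
lemma Z_pow_N: "Z x ^ N = R x ^ N * alpha' x"
proof -
  have "sg x ^ N = sg x" using m_ge_2 by (intro tri_slope_power_odd) simp
  then have "Z x ^ N = sg x * (E (alpha x) ^ N / alpha x ^ N)"
    by (simp add: Z_def P_def power_mult_distrib power_divide)
  also have "\<dots> = (q (alpha x) / alpha x)^N * ((E (alpha x) / q (alpha x))^N * sg x)"
    using alpha_pos[of x] q_pos[of "alpha x"] by (simp add: power_divide field_simps)
  finally show ?thesis by (simp add: R_def alpha'_def g_def mult.commute)
qed

lemma eta1_sq_add_eta2_sq: "(eta p $ 1)^2 + (eta p $ 2)^2 = (R (fst p))^2"
proof -
  have "(eta p $ 1)^2 + (eta p $ 2)^2 = (R (fst p))^2 * (cos (snd p))^2 + (R (fst p))^2 * (sin (snd p))^2"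
    by (simp add: eta_def power_mult_distrib)
  also have "\<dots> = (R (fst p))^2"
    by (metis distrib_left mult.right_neutral sin_cos_squared_add2)
  finally show ?thesis .
qed

lemma Phi_eta: "Phi m (eta p) = 1"
  using R_pow_add_Z_pow[of "fst p"] unfolding Phi_def eta1_sq_add_eta2_sq by (simp add: power_mult eta_def)

lemma grad_Phi_eta:
  assumes "p \<in> pdom"
  shows "grad_Phi m (eta p) = (real (2*m) * R (fst p) ^ N / alpha (fst p)) *\<^sub>R
           cross3 (pd_u (rot_surf alpha) p) (pd_v (rot_surf alpha) p)"
proof -
  let ?u = "fst p" and ?v = "snd p"
  have "N = Suc (2*(m-1))" using m_ge_2 by simp
  then have R_pow: "((R ?u)^2)^(m-1) * R ?u = R ?u ^ N"
    by (simp add: power_mult mult.commute)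
  have "cross3 (pd_u (rot_surf alpha) p) (pd_v (rot_surf alpha) p)
      = vector [- (alpha ?u * cos ?v), - (alpha ?u * sin ?v), alpha ?u * alpha' ?u]"
    unfolding pd_u_rot_surf pd_v_rot_surf[OF assms] by (rule cross3_rotation) simp
  moreover have "grad_Phi m (eta p) = vector [real (2*m) * ((R ?u)^2)^(m-1) * (- (R ?u * cos ?v)),
      real (2*m) * ((R ?u)^2)^(m-1) * (- (R ?u * sin ?v)), real (2*m) * (Z ?u)^N]"
    unfolding grad_Phi_def eta1_sq_add_eta2_sq by (simp add: eta_def)
  ultimately show ?thesis
    using alpha_pos[of ?u] R_pow Z_pow_N[of ?u]
    by (simp add: vec_eq_iff forall_3 field_simps)
qed

lemma is_BG_map_eta: "is_BG_map m (rot_surf alpha) eta"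
  unfolding is_BG_map_def
proof (intro ballI conjI)
  fix p assume p: "p \<in> pdom"
  show "Phi m (eta p) = 1" by (rule Phi_eta)
  have "real (2*m) * R (fst p) ^ N / alpha (fst p) > 0"
    using R_pos alpha_pos m_ge_2 by simp
  with has_gderiv_Phi[of m "eta p", unfolded grad_Phi_eta[OF p]]
  show "\<exists>\<mu>>0. GDERIV (Phi m) (eta p) :> \<mu> *\<^sub>R cross3 (pd_u (rot_surf alpha) p) (pd_v (rot_surf alpha) p)"
    by blast
qed

lemma mink_mean_curv_eta:
  assumes "p \<in> pdom"
  shows "mink_mean_curv_at (rot_surf alpha) eta p (-1)"
proof -
  let ?a = "alpha (fst p)"
  have a: "?a \<noteq> 0" using alpha_pos[of "fst p"] by simp
  have "pd_u eta p = (c3 / ?a^2 - 1) *\<^sub>R pd_u (rot_surf alpha) p + 0 *\<^sub>R pd_v (rot_surf alpha) p"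
    unfolding pd_u_eta pd_u_rot_surf by (simp add: vec_eq_iff forall_3 algebra_simps)
  moreover have "pd_v eta p = 0 *\<^sub>R pd_u (rot_surf alpha) p + (- R (fst p) / ?a) *\<^sub>R pd_v (rot_surf alpha) p"
    unfolding pd_v_eta[OF assms] pd_v_rot_surf[OF assms] using a
    by (simp add: vec_eq_iff forall_3 field_simps)
  moreover have "-1 = ((c3 / ?a^2 - 1) + - R (fst p) / ?a) / 2"
    using a by (simp add: R_def q_def field_simps power2_eq_square)
  ultimately show ?thesis unfolding mink_mean_curv_at_def by blast
qed

lemma C1_on_dom_eta: "C1_on_dom eta"
proof -
  define R' Z' where "R' x = (1 - c3 / (alpha x)^2) * alpha' x" and "Z' x = c3 / (alpha x)^2 - 1"
    for x
  define eta' where "eta' p k = (vector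
      [- (R (fst p) * (snd k * - sin (snd p)) + fst k * R' (fst p) * cos (snd p)),
       - (R (fst p) * (snd k * cos (snd p)) + fst k * R' (fst p) * sin (snd p)),
       fst k * Z' (fst p)] :: real^3)" for p k
  have fst_deriv: "((\<lambda>p. F (fst p)) has_derivative (\<lambda>h. fst h * F')) (at p)"
    if "(F has_real_derivative F') (at (fst p))" for F F' and p :: "real \<times> real"
    using DERIV_compose_FDERIV[OF that has_derivative_fst[OF has_derivative_ident]] by simp
  have snd_deriv: "((\<lambda>p. F (snd p)) has_derivative (\<lambda>h. snd h * F')) (at p)"
    if "(F has_real_derivative F') (at (snd p))" for F F' and p :: "real \<times> real"
    using DERIV_compose_FDERIV[OF that has_derivative_snd[OF has_derivative_ident]] by simp
  have "(eta has_derivative eta' p) (at p)" for p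
    unfolding eta_def[abs_def] eta'_def R'_def Z'_def
    by (intro has_derivative_vector3 has_derivative_minus has_derivative_mult fst_deriv snd_deriv
          R_has_real_derivative Z_has_real_derivative DERIV_cos DERIV_sin)
  moreover have "continuous_on pdom (\<lambda>p. eta' p k)" for k
  proof -
    have "isCont R x" "isCont R' x" "isCont Z' x" for x
      unfolding R'_def[abs_def] Z'_def[abs_def] using alpha_pos[of x]
      by (auto intro!: continuous_intros isCont_alpha isCont_alpha'
          intro: DERIV_isCont[OF R_has_real_derivative])
    then have "continuous_on pdom (\<lambda>p. F (fst p))" if "F \<in> {R, R', Z'}" for F
      using that by (intro continuous_on_compose2[OF _ continuous_on_fst[OF continuous_on_id], of UNIV])
        (auto intro: continuous_at_imp_continuous_on)
    then show ?thesis
      unfolding eta'_def vector3_eq_axis by (intro continuous_intros) auto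
  qed
  ultimately show ?thesis
    unfolding C1_on_dom_def by (blast intro: has_derivative_at_withinI)
qed

end


theorem theorem6p2:
  fixes m :: nat and c3 c5 :: real
  assumes "m \<ge> 2" and "0 < c3" and "c3 < 1/4"
  shows "(\<forall>\<alpha> \<in> {b2 c3..b3 c3}. Jint m c3 integrable_on {b2 c3..\<alpha>})
    \<and> strict_mono_on {b2 c3..b3 c3} (J m c3)
    \<and> d2 m c3 > 0
    \<and> (\<forall>u \<in> {c5 - d2 m c3..c5 + d2 m c3}.
          \<exists>!\<alpha>. \<alpha> \<in> {b2 c3..b3 c3} \<and> J m c3 \<alpha> = \<bar>u - c5\<bar>)
    \<and> (\<exists>a. is_alpha_star m c3 c5 a)
    \<and> (\<forall>a. is_alpha_star m c3 c5 a \<longrightarrow>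
          (\<forall>x. a x \<in> {b2 c3..b3 c3})
        \<and> (\<forall>x. a (x + 2 * d2 m c3) = a x)
        \<and> C2_real a
        \<and> (\<exists>\<eta>. is_BG_map m (rot_surf a) \<eta> \<and> C1_on_dom \<eta>
              \<and> (\<forall>p \<in> pdom. mink_mean_curv_at (rot_surf a) \<eta> p (-1))))"
proof -
  interpret periodic_profile m c3 c5
    using assms by unfold_locales auto
  have "\<forall>\<alpha> \<in> {b2 c3..b3 c3}. Jint m c3 integrable_on {b2 c3..\<alpha>}"
    by (auto intro: integrable_on_subinterval[OF Jint_integrable])
  moreover have "\<forall>u \<in> {c5 - d2 m c3..c5 + d2 m c3}. \<exists>!\<alpha>. \<alpha> \<in> {b2 c3..b3 c3} \<and> J m c3 \<alpha> = \<bar>u - c5\<bar>"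
  proof
    fix u assume "u \<in> {c5 - d2 m c3..c5 + d2 m c3}"
    then have "\<bar>u - c5\<bar> \<in> {0..d2 m c3}" by auto
    then show "\<exists>!\<alpha>. \<alpha> \<in> {b2 c3..b3 c3} \<and> J m c3 \<alpha> = \<bar>u - c5\<bar>" by (rule ex1_J_eq)
  qed
  moreover have "(\<forall>x. a x \<in> {b2 c3..b3 c3})
        \<and> (\<forall>x. a (x + 2 * d2 m c3) = a x)
        \<and> C2_real a
        \<and> (\<exists>\<eta>. is_BG_map m (rot_surf a) \<eta> \<and> C1_on_dom \<eta>
              \<and> (\<forall>p \<in> pdom. mink_mean_curv_at (rot_surf a) \<eta> p (-1)))"
    if "is_alpha_star m c3 c5 a" for a
    unfolding is_alpha_star_imp_eq[OF that]
    using alpha_range alpha_periodic C2_real_alpha is_BG_map_eta C1_on_dom_eta mink_mean_curv_eta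
    by blast
  ultimately show ?thesis
    using strict_mono_on_J d2_pos is_alpha_star_alpha by blast
qed

end
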